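(* Let $m\ge3$ be an odd integer and $q$ an odd prime, and set $n'=\left\lceil\frac{q}{q-1}\left(q^{m-1}-q^{m-2}-q^{\frac{m-3}{2}}\right)\right\rceil-q^{m-1}+q^{m-2}-q^{\frac{m-3}{2}}$. Let $\mathbf{C}$ be a $q$-ary linear $[q^{m-1},m]$ code whose set of nonzero weights is $\{q^{m-1}-q^{m-2}-q^{\frac{m-3}{2}},\,q^{m-1}-q^{m-2},\,q^{m-1}-q^{m-2}+q^{\frac{m-3}{2}}\}$. Then the code $\mathbf{C}'$ obtained from $\mathbf{C}$ by the extension construction is a minimal $[q^{m-1}+n',\ m,\ q^{m-1}-q^{m-2}-q^{\frac{m-3}{2}}]_q$ code with maximum weight $q^{m-1}-q^{m-2}+q^{\frac{m-3}{2}}+n'$, and it violates the Ashikhmin–Barg condition.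
   Context: Extension construction for a $q$-ary linear $[N,K]$ code $\mathbf{D}$ with $K\ge2$, minimum nonzero weight $w_{min}$, maximum weight $w_{max}$ and $n'=\lceil\frac{qw_{min}}{q-1}\rceil-w_{max}\ge1$: choose a basis $\mathbf{r}_1,\dots,\mathbf{r}_K$ with $wt(\mathbf{r}_1)=w_{max}$, $wt(\mathbf{r}_2)=w_{min}$, and $\mathbf{a}\in(\mathbf{F}_q^* )^{n'}$; the extended code is generated by $(\mathbf{a},\mathbf{r}_1),(\mathbf{0},\mathbf{r}_2),\dots,(\mathbf{0},\mathbf{r}_K)$ in $\mathbf{F}_q^{n'+N}$. A code is minimal if any two nonzero codewords $\mathbf{c},\mathbf{c}'$ with $supp(\mathbf{c}')\subseteq supp(\mathbf{c})$ satisfy $\mathbf{c}'=\lambda\mathbf{c}$ with $\lambda\in\mathbf{F}_q^*$. Ashikhmin–Barg condition: $w_{min}/w_{max}>(q-1)/q$. *)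

theory Defs
  imports Complex_Main "HOL-Library.Function_Algebras" "HOL-Computational_Algebra.Primes"
begin

text \<open>Words of length N over a finite field 'a are modelled as functions
  nat => 'a vanishing outside {0..<N}.  Scalar multiplication is pointwise.\<close>

definition sc :: "'a::field \<Rightarrow> (nat \<Rightarrow> 'a) \<Rightarrow> (nat \<Rightarrow> 'a)" where
  "sc c v = (\<lambda>i. c * v i)"

lemma vector_space_sc: "vector_space (sc :: 'a::field \<Rightarrow> _)"
  by unfold_locales (auto simp: sc_def fun_eq_iff algebra_simps)

definition words :: "nat \<Rightarrow> (nat \<Rightarrow> 'a::zero) set" where
  "words N = {v. \<forall>i\<ge>N. v i = 0}"

definition supp :: "(nat \<Rightarrow> 'a::zero) \<Rightarrow> nat set" where
  "supp v = {i. v i \<noteq> 0}"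

definition wt :: "(nat \<Rightarrow> 'a::zero) \<Rightarrow> nat" where
  "wt v = card (supp v)"

definition linear_code :: "nat \<Rightarrow> nat \<Rightarrow> (nat \<Rightarrow> 'a::field) set \<Rightarrow> bool" where
  "linear_code N K C \<longleftrightarrow> C \<subseteq> words N \<and> module.subspace sc C \<and> vector_space.dim sc C = K"

definition nonzero_weights :: "(nat \<Rightarrow> 'a::zero) set \<Rightarrow> nat set" where
  "nonzero_weights C = {wt c | c. c \<in> C \<and> c \<noteq> 0}"

definition min_weight :: "(nat \<Rightarrow> 'a::zero) set \<Rightarrow> nat" where
  "min_weight C = Min (nonzero_weights C)"

definition max_weight :: "(nat \<Rightarrow> 'a::zero) set \<Rightarrow> nat" where
  "max_weight C = Max (nonzero_weights C)"

definition minimal_code :: "(nat \<Rightarrow> 'a::field) set \<Rightarrow> bool" where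
  "minimal_code C \<longleftrightarrow> (\<forall>c\<in>C. \<forall>c'\<in>C. c \<noteq> 0 \<and> c' \<noteq> 0 \<and> supp c' \<subseteq> supp c
      \<longrightarrow> (\<exists>l. l \<noteq> 0 \<and> c' = sc l c))"

definition ashikhmin_barg :: "nat \<Rightarrow> (nat \<Rightarrow> 'a::zero) set \<Rightarrow> bool" where
  "ashikhmin_barg q C \<longleftrightarrow>
     real (min_weight C) / real (max_weight C) > (real q - 1) / real q"

definition concat_word :: "nat \<Rightarrow> (nat \<Rightarrow> 'a::zero) \<Rightarrow> (nat \<Rightarrow> 'a) \<Rightarrow> (nat \<Rightarrow> 'a)" where
  "concat_word n a r = (\<lambda>i. if i < n then a i else r (i - n))"

definition extension_code ::
  "nat \<Rightarrow> (nat \<Rightarrow> 'a::field) \<Rightarrow> (nat \<Rightarrow> 'a) list \<Rightarrow> (nat \<Rightarrow> 'a) set" where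
  "extension_code n a rs = module.span sc
     (insert (concat_word n a (rs ! 0)) ((\<lambda>r. concat_word n 0 r) ` set (tl rs)))"

end

theory Submission
  imports Defs "HOL-Library.Cardinality"
begin

(* Deleting the n' prepended coordinates is a linear map which sends the generators of C'
   bijectively onto the independent basis of C; hence it is injective on C', maps C' onto C,
   and never enlarges supports. So C' has the dimension of C and inherits minimality from C,
   and every nonzero weight of C' lies between w_min and w_max + n', both bounds being attained
   by the extended first two basis vectors. C itself is minimal by the Ashikhmin-Barg criterion,
   because (q - 1) w3 < q w1, while the choice of n' gives (q - 1)(w3 + n') >= q w1, so C'
   violates that criterion. *)

interpretation V: vector_space "sc :: 'a::field \<Rightarrow> (nat \<Rightarrow> 'a) \<Rightarrow> _"
  by (rule vector_space_sc)

lemma subspace_words: "V.subspace (words N)"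
  by (auto simp: V.subspace_def words_def sc_def)

lemma supp_subset_words: "c \<in> words N \<Longrightarrow> supp c \<subseteq> {..<N}"
  by (auto simp: words_def supp_def) (meson not_less)

lemma finite_supp_words: "c \<in> words N \<Longrightarrow> finite (supp c)"
  using supp_subset_words finite_subset by blast

lemma wt_pos: "finite (supp c) \<Longrightarrow> c \<noteq> 0 \<Longrightarrow> 0 < wt c"
  by (auto simp: wt_def supp_def card_gt_0_iff fun_eq_iff)

lemma finite_nonzero_weights:
  assumes "C \<subseteq> words N"
  shows "finite (nonzero_weights C)"
proof (rule finite_subset)
  show "nonzero_weights C \<subseteq> {..N}"
    using assms card_mono[OF _ supp_subset_words] by (fastforce simp: nonzero_weights_def wt_def)
qed simp

lemma min_weight_le_wt:
  "C \<subseteq> words N \<Longrightarrow> c \<in> C \<Longrightarrow> c \<noteq> 0 \<Longrightarrow> min_weight C \<le> wt c"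
  unfolding min_weight_def by (rule Min_le[OF finite_nonzero_weights]) (auto simp: nonzero_weights_def)

lemma wt_le_max_weight:
  "C \<subseteq> words N \<Longrightarrow> c \<in> C \<Longrightarrow> c \<noteq> 0 \<Longrightarrow> wt c \<le> max_weight C"
  unfolding max_weight_def by (rule Max_ge[OF finite_nonzero_weights]) (auto simp: nonzero_weights_def)

section \<open>The Ashikhmin-Barg criterion\<close>

lemma ashikhmin_barg_iff:
  assumes "0 < q" "0 < max_weight C"
  shows "ashikhmin_barg q C \<longleftrightarrow> (q - 1) * max_weight C < q * min_weight C"
proof -
  have "ashikhmin_barg q C \<longleftrightarrow> (real q - 1) * real (max_weight C) < real q * real (min_weight C)"
    using assms by (simp add: ashikhmin_barg_def field_simps)
  also have "(real q - 1) * real (max_weight C) = real ((q - 1) * max_weight C)"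
    using assms by (simp add: of_nat_diff)
  finally show ?thesis
    by (metis of_nat_less_iff of_nat_mult)
qed

lemma card_nonzero_scalars_diff_nonzero:
  fixes y y' :: "'a::{field,finite}"
  assumes "y \<noteq> 0"
  shows "card {\<mu>. \<mu> \<noteq> 0 \<and> y - \<mu> * y' \<noteq> 0} + (if y' \<noteq> 0 then 1 else 0) = CARD('a) - 1"
proof (cases "y' = 0")
  case True
  then have "{\<mu>. \<mu> \<noteq> 0 \<and> y - \<mu> * y' \<noteq> 0} = - {0}"
    using assms by auto
  with True show ?thesis
    by (simp add: Compl_eq_Diff_UNIV)
next
  case False
  then have "{\<mu>. \<mu> \<noteq> 0 \<and> y - \<mu> * y' \<noteq> 0} = - {0, y / y'}"
    using assms by (auto simp: field_simps)
  moreover have "card (- {0, y / y'}) = CARD('a) - 2"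
    using assms False by (simp add: Compl_eq_Diff_UNIV card_Diff_subset)
  moreover have "2 \<le> CARD('a)"
    using card_mono[of UNIV "{0 :: 'a, 1}"] by simp
  ultimately show ?thesis
    using False by simp
qed

lemma wt_eq_sum_indicator:
  assumes "finite S" "supp f \<subseteq> S"
  shows "wt f = (\<Sum>i\<in>S. if f i \<noteq> 0 then 1 else 0)"
proof -
  have "supp f = {i \<in> S. f i \<noteq> 0}"
    using assms by (auto simp: supp_def)
  then show ?thesis
    using assms(1) by (simp add: wt_def flip: sum.inter_filter)
qed

lemma sum_wt_diff_scaled:
  fixes x x' :: "nat \<Rightarrow> 'a::{field,finite}"
  assumes fin: "finite (supp x)" and sub: "supp x' \<subseteq> supp x"
  shows "(\<Sum>\<mu>\<in>-{0}. wt (x - sc \<mu> x')) + wt x' = (CARD('a) - 1) * wt x"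
proof -
  let ?S = "supp x"
  have "supp (x - sc \<mu> x') \<subseteq> ?S" for \<mu>
    using sub by (auto simp: supp_def sc_def)
  then have "(\<Sum>\<mu>\<in>-{0}. wt (x - sc \<mu> x'))
      = (\<Sum>\<mu>\<in>-{0}. \<Sum>i\<in>?S. if x i - \<mu> * x' i \<noteq> 0 then 1 else 0)"
    by (simp add: wt_eq_sum_indicator[OF fin] sc_def)
  also have "\<dots> = (\<Sum>i\<in>?S. card {\<mu>. \<mu> \<noteq> 0 \<and> x i - \<mu> * x' i \<noteq> 0})"
    by (subst sum.swap, intro sum.cong refl) (simp flip: sum.inter_filter add: Collect_conj_eq Compl_eq)
  finally have "(\<Sum>\<mu>\<in>-{0}. wt (x - sc \<mu> x')) + wt x'
      = (\<Sum>i\<in>?S. card {\<mu>. \<mu> \<noteq> 0 \<and> x i - \<mu> * x' i \<noteq> 0} + (if x' i \<noteq> 0 then 1 else 0))"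
    by (simp add: wt_eq_sum_indicator[OF fin sub] sum.distrib)
  also have "\<dots> = (\<Sum>i\<in>?S. CARD('a) - 1)"
    by (intro sum.cong refl card_nonzero_scalars_diff_nonzero) (auto simp: supp_def)
  finally show ?thesis
    by (simp add: wt_def)
qed

lemma minimal_code_if_ashikhmin_barg:
  fixes C :: "(nat \<Rightarrow> 'a::{field,finite}) set"
  assumes subspace: "V.subspace C" and words: "C \<subseteq> words N"
    and AB: "ashikhmin_barg CARD('a) C"
  shows "minimal_code C"
  unfolding minimal_code_def
proof (intro ballI impI, rule ccontr)
  fix c c' assume c: "c \<in> C" and c': "c' \<in> C"
    and h: "c \<noteq> 0 \<and> c' \<noteq> 0 \<and> supp c' \<subseteq> supp c"
    and not_multiple: "\<nexists>l. l \<noteq> 0 \<and> c' = sc l c"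
  let ?q = "CARD('a)"
  \<comment> \<open>The q - 1 words c - \<mu> c' are nonzero codewords, and counting coordinates gives
    \<open>\<Sum>\<^sub>\<mu> wt (c - \<mu> c') + wt c' = (q - 1) wt c\<close>; hence q w_min \<le> (q - 1) w_max.\<close>
  have "min_weight C \<le> wt (c - sc \<mu> c')" if "\<mu> \<in> -{0}" for \<mu>
  proof (rule min_weight_le_wt[OF words])
    show "c - sc \<mu> c' \<in> C"
      using subspace c c' by (intro V.subspace_diff V.subspace_scale)
    show "c - sc \<mu> c' \<noteq> 0"
    proof
      assume "c - sc \<mu> c' = 0"
      then have "c' = sc (inverse \<mu>) c"
        using that by (auto simp: fun_eq_iff sc_def)
      moreover have "inverse \<mu> \<noteq> 0"
        using that by simp
      ultimately show False
        using not_multiple by blast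
    qed
  qed
  then have "of_nat (card (-{0::'a})) * min_weight C \<le> (\<Sum>\<mu>\<in>-{0}. wt (c - sc \<mu> c'))"
    by (rule sum_bounded_below)
  then have "(?q - 1) * min_weight C + min_weight C \<le> (\<Sum>\<mu>\<in>-{0}. wt (c - sc \<mu> c')) + wt c'"
    using min_weight_le_wt[OF words c'] h by (intro add_mono) (simp_all add: Compl_eq_Diff_UNIV)
  also have "\<dots> = (?q - 1) * wt c"
    using h c words by (intro sum_wt_diff_scaled finite_supp_words) auto
  also have "\<dots> \<le> (?q - 1) * max_weight C"
    using wt_le_max_weight[OF words c] h by simp
  finally have "\<not> (?q - 1) * max_weight C < ?q * min_weight C"
    by (simp add: mult_eq_if)
  moreover have "0 < max_weight C"
  proof -
    have "0 < wt c"
      using h c words by (intro wt_pos finite_supp_words) auto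
    then show ?thesis
      using wt_le_max_weight[OF words c] h by simp
  qed
  ultimately show False
    using AB by (simp add: ashikhmin_barg_iff)
qed

section \<open>Deleting a prefix\<close>

definition drop_word :: "nat \<Rightarrow> (nat \<Rightarrow> 'a) \<Rightarrow> (nat \<Rightarrow> 'a)" where
  "drop_word n c = (\<lambda>i. c (i + n))"

lemma drop_word_concat_word [simp]: "drop_word n (concat_word n p r) = r"
  by (simp add: drop_word_def concat_word_def)

lemma linear_drop_word: "Vector_Spaces.linear sc sc (drop_word n :: (nat \<Rightarrow> 'a::field) \<Rightarrow> _)"
  by (auto simp: Vector_Spaces.linear_def module_hom_iff vector_space_sc V.module_axioms drop_word_def sc_def)

lemma shift_supp_drop_word: "(\<lambda>i. i + n) ` supp (drop_word n c) = {i \<in> supp c. n \<le> i}"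
  by (auto simp: supp_def drop_word_def image_def) (metis le_add_diff_inverse2)

lemma supp_drop_word_mono:
  "supp c' \<subseteq> supp c \<Longrightarrow> supp (drop_word n c') \<subseteq> supp (drop_word n c)"
  by (auto simp: supp_def drop_word_def)

lemma wt_drop_word:
  assumes "finite (supp c)"
  shows "wt (drop_word n c) \<le> wt c" and "wt c \<le> n + wt (drop_word n c)"
proof -
  have shift: "wt (drop_word n c) = card {i \<in> supp c. n \<le> i}"
    unfolding wt_def shift_supp_drop_word[symmetric] by (simp add: card_image)
  then show "wt (drop_word n c) \<le> wt c"
    using assms by (simp add: wt_def card_mono)
  have "supp c \<subseteq> {..<n} \<union> {i \<in> supp c. n \<le> i}"
    by auto
  then have "wt c \<le> card ({..<n} \<union> {i \<in> supp c. n \<le> i})"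
    using assms unfolding wt_def by (intro card_mono) auto
  also have "\<dots> \<le> n + wt (drop_word n c)"
    using card_Un_le[of "{..<n}" "{i \<in> supp c. n \<le> i}"] shift by simp
  finally show "wt c \<le> n + wt (drop_word n c)" .
qed

lemma concat_word_words: "r \<in> words N \<Longrightarrow> concat_word n p r \<in> words (N + n)"
  by (simp add: words_def concat_word_def)

lemma concat_word_nonzero:
  assumes "r \<noteq> 0"
  shows "concat_word n p r \<noteq> 0"
proof
  assume "concat_word n p r = 0"
  then have "drop_word n (concat_word n p r) = 0"
    by (simp add: drop_word_def zero_fun_def)
  with assms show False
    by simp
qed

lemma wt_concat_word:
  assumes "finite (supp r)"
  shows "wt (concat_word n p r) = card {i. i < n \<and> p i \<noteq> 0} + wt r"
proof -
  have "supp (concat_word n p r) = {i. i < n \<and> p i \<noteq> 0} \<union> (\<lambda>i. i + n) ` supp r"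
    by (auto simp: supp_def concat_word_def image_def)
  moreover have "card ({i. i < n \<and> p i \<noteq> 0} \<union> (\<lambda>i. i + n) ` supp r)
      = card {i. i < n \<and> p i \<noteq> 0} + card ((\<lambda>i. i + n) ` supp r)"
    using assms by (intro card_Un_disjoint) auto
  ultimately show ?thesis
    by (simp add: wt_def card_image)
qed

lemma dim_image_eq_if_inj_on_span:
  fixes f :: "(nat \<Rightarrow> 'a::field) \<Rightarrow> (nat \<Rightarrow> 'a)"
  assumes f: "Vector_Spaces.linear sc sc f" and inj: "inj_on f (V.span S)"
  shows "V.dim (f ` S) = V.dim S"
proof -
  interpret f: Vector_Spaces.linear sc sc f
    by (fact f)
  obtain B where B: "B \<subseteq> S" "V.independent B" "S \<subseteq> V.span B" "card B = V.dim S"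
    using V.basis_exists by blast
  have inj_B: "inj_on f (V.span B)"
    using inj_on_subset[OF inj] V.span_mono[OF B(1)] by blast
  show ?thesis
  proof (rule V.basis_card_eq_dim[symmetric, THEN trans])
    show "f ` B \<subseteq> f ` S"
      using B(1) by blast
    show "f ` S \<subseteq> V.span (f ` B)"
      using B(3) by (auto simp: f.span_image)
    show "V.independent (f ` B)"
      using B(2) inj_B by (rule f.independent_injective_image)
    show "card (f ` B) = V.dim S"
      using B(4) inj_on_subset[OF inj_B V.span_superset] by (simp add: card_image)
  qed
qed

section \<open>The extension construction\<close>

locale code_extension =
  fixes C :: "(nat \<Rightarrow> 'a::field) set" and N n :: nat and a :: "nat \<Rightarrow> 'a"
    and rs :: "(nat \<Rightarrow> 'a) list"
  assumes code_words: "C \<subseteq> words N"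
    and basis_span: "V.span (set rs) = C"
    and basis_independent: "V.independent (set rs)"
    and basis_distinct: "distinct rs"
    and basis_length: "2 \<le> length rs"
    and prefix_nonzero: "\<forall>i<n. a i \<noteq> 0"
begin

sublocale drop: Vector_Spaces.linear sc sc "drop_word n"
  by (rule linear_drop_word)

abbreviation C' :: "(nat \<Rightarrow> 'a) set" where
  "C' \<equiv> extension_code n a rs"

definition generators :: "(nat \<Rightarrow> 'a) set" where
  "generators = insert (concat_word n a (rs ! 0)) (concat_word n 0 ` set (tl rs))"

lemma C'_eq_span: "C' = V.span generators"
  by (simp add: extension_code_def generators_def)

lemma basis_split:
  "set rs = insert (rs ! 0) (set (tl rs))" "rs ! 0 \<notin> set (tl rs)" "rs ! 1 \<in> set (tl rs)"
proof -
  obtain r0 r1 rest where "rs = r0 # r1 # rest"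
    using basis_length by (metis One_nat_def Suc_1 Suc_le_length_iff)
  then show "set rs = insert (rs ! 0) (set (tl rs))" "rs ! 0 \<notin> set (tl rs)" "rs ! 1 \<in> set (tl rs)"
    using basis_distinct by auto
qed

lemma finite_supp_C: "c \<in> C \<Longrightarrow> finite (supp c)"
  using code_words finite_supp_words by blast

lemma basis_subset_C: "set rs \<subseteq> C"
  using basis_span V.span_superset by blast

lemma basis_nonzero: "r \<in> set rs \<Longrightarrow> r \<noteq> 0"
  using basis_independent V.dependent_zero by blast

lemma drop_word_generators: "drop_word n ` generators = set rs"
  using basis_split(1) by (simp add: generators_def image_image)

lemma inj_on_drop_word_generators: "inj_on (drop_word n) generators"
  using basis_split(2) by (auto simp: generators_def inj_on_def)

lemma inj_on_drop_word: "inj_on (drop_word n) C'"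
  unfolding C'_eq_span using basis_independent inj_on_drop_word_generators
  by (intro drop.inj_on_span_independent_image) (simp_all add: drop_word_generators)

lemma drop_word_image: "drop_word n ` C' = C"
  unfolding C'_eq_span using basis_span drop_word_generators
  by (simp flip: drop.span_image)

lemma C'_subset_words: "C' \<subseteq> words (N + n)"
  unfolding C'_eq_span
proof (rule V.span_minimal[OF _ subspace_words])
  have "set rs \<subseteq> words N"
    using basis_subset_C code_words by blast
  then show "generators \<subseteq> words (N + n)"
    using basis_split(1) by (auto simp: generators_def intro!: concat_word_words)
qed

lemma dim_C': "V.dim C' = V.dim C"
proof -
  have "V.dim (drop_word n ` C') = V.dim C'"
    using inj_on_drop_word
    by (intro dim_image_eq_if_inj_on_span linear_drop_word) (simp add: C'_eq_span V.span_span)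
  then show ?thesis
    by (simp add: drop_word_image)
qed

lemma linear_code_C': "linear_code N K C \<Longrightarrow> linear_code (N + n) K C'"
  using C'_subset_words dim_C' by (simp add: linear_code_def C'_eq_span)

lemma drop_word_nonzero: "c \<in> C' \<Longrightarrow> c \<noteq> 0 \<Longrightarrow> drop_word n c \<noteq> 0"
  using inj_on_drop_word drop.zero V.span_zero by (metis C'_eq_span inj_onD)

lemma weight_bounds_C':
  assumes "c \<in> C'" "c \<noteq> 0"
  shows "min_weight C \<le> wt c" and "wt c \<le> max_weight C + n"
proof -
  have c_drop: "drop_word n c \<in> C" "drop_word n c \<noteq> 0"
    using assms drop_word_image drop_word_nonzero by auto
  have "finite (supp c)"
    using assms C'_subset_words finite_supp_words by blast
  then show "min_weight C \<le> wt c" and "wt c \<le> max_weight C + n"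
    using wt_drop_word[of c n] min_weight_le_wt[OF code_words c_drop]
      wt_le_max_weight[OF code_words c_drop] by linarith+
qed

lemma extended_basis_in_C':
  "concat_word n a (rs ! 0) \<in> C'" "concat_word n 0 (rs ! 1) \<in> C'"
proof -
  have "concat_word n a (rs ! 0) \<in> generators" "concat_word n 0 (rs ! 1) \<in> generators"
    using basis_split(3) by (simp_all add: generators_def)
  then show "concat_word n a (rs ! 0) \<in> C'" "concat_word n 0 (rs ! 1) \<in> C'"
    unfolding C'_eq_span by (simp_all add: V.span_base)
qed

lemma first_basis_vectors: "rs ! 0 \<in> set rs" "rs ! 1 \<in> set rs"
  using basis_length by (auto intro!: nth_mem)

lemma min_weight_C':
  assumes "wt (rs ! 1) = min_weight C"
  shows "min_weight C' = min_weight C"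
  unfolding min_weight_def[of C']
proof (rule Min_eqI[OF finite_nonzero_weights[OF C'_subset_words]])
  show "y \<in> nonzero_weights C' \<Longrightarrow> min_weight C \<le> y" for y
    using weight_bounds_C'(1) by (auto simp: nonzero_weights_def)
  have r1: "rs ! 1 \<in> C" "rs ! 1 \<noteq> 0"
    using first_basis_vectors basis_subset_C basis_nonzero by auto
  then have "wt (concat_word n 0 (rs ! 1)) = min_weight C"
    using wt_concat_word[OF finite_supp_C, of "rs ! 1" n 0] assms by simp
  then show "min_weight C \<in> nonzero_weights C'"
    using extended_basis_in_C'(2) concat_word_nonzero[OF r1(2)]
    unfolding nonzero_weights_def by force
qed

lemma max_weight_C':
  assumes "wt (rs ! 0) = max_weight C"
  shows "max_weight C' = max_weight C + n"
  unfolding max_weight_def[of C']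
proof (rule Max_eqI[OF finite_nonzero_weights[OF C'_subset_words]])
  show "y \<in> nonzero_weights C' \<Longrightarrow> y \<le> max_weight C + n" for y
    using weight_bounds_C'(2) by (auto simp: nonzero_weights_def)
  have r0: "rs ! 0 \<in> C" "rs ! 0 \<noteq> 0"
    using first_basis_vectors basis_subset_C basis_nonzero by auto
  have "{i. i < n \<and> a i \<noteq> 0} = {..<n}"
    using prefix_nonzero by auto
  then have "wt (concat_word n a (rs ! 0)) = max_weight C + n"
    using wt_concat_word[OF finite_supp_C[OF r0(1)], of n a] assms by simp
  then show "max_weight C + n \<in> nonzero_weights C'"
    using extended_basis_in_C'(1) concat_word_nonzero[OF r0(2)]
    unfolding nonzero_weights_def by force
qed

lemma minimal_code_C':
  assumes "minimal_code C"
  shows "minimal_code C'"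
  unfolding minimal_code_def
proof (intro ballI impI)
  fix c c' assume c: "c \<in> C'" and c': "c' \<in> C'"
    and h: "c \<noteq> 0 \<and> c' \<noteq> 0 \<and> supp c' \<subseteq> supp c"
  then have "drop_word n c \<in> C" "drop_word n c' \<in> C" "drop_word n c \<noteq> 0" "drop_word n c' \<noteq> 0"
    using drop_word_image drop_word_nonzero by auto
  moreover have "supp (drop_word n c') \<subseteq> supp (drop_word n c)"
    using h by (intro supp_drop_word_mono) auto
  ultimately obtain l where l: "l \<noteq> 0" "drop_word n c' = sc l (drop_word n c)"
    using assms unfolding minimal_code_def by blast
  then have "drop_word n c' = drop_word n (sc l c)"
    by (simp add: drop.scale)
  moreover have "sc l c \<in> C'"
    using c by (simp add: C'_eq_span V.span_scale)
  ultimately have "c' = sc l c"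
    using inj_on_drop_word c' by (auto dest: inj_onD)
  with l show "\<exists>l. l \<noteq> 0 \<and> c' = sc l c"
    by blast
qed

lemma not_ashikhmin_barg_C':
  assumes "1 < q" and max: "wt (rs ! 0) = max_weight C" and min: "wt (rs ! 1) = min_weight C"
    and n: "n = nat (\<lceil>real q / (real q - 1) * real (min_weight C)\<rceil> - int (max_weight C))"
  shows "\<not> ashikhmin_barg q C'"
proof -
  have "real q / (real q - 1) * real (min_weight C) \<le> real (max_weight C + n)"
    unfolding n by linarith
  then have "real (q * min_weight C) \<le> real ((q - 1) * max_weight C')"
    using assms(1) by (simp add: max_weight_C'[OF max] of_nat_diff field_simps)
  then have "q * min_weight C \<le> (q - 1) * max_weight C'"
    by (simp only: of_nat_le_iff)
  moreover have "0 < max_weight C'"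
  proof -
    have "0 < wt (rs ! 0)"
      using first_basis_vectors basis_subset_C basis_nonzero by (intro wt_pos finite_supp_C) auto
    then show ?thesis
      using max by (simp add: max_weight_C'[OF max])
  qed
  ultimately show ?thesis
    using assms(1) by (simp add: ashikhmin_barg_iff min_weight_C'[OF min])
qed

end

lemma three_weights_ratio:
  fixes q m :: nat
  assumes "3 \<le> q" "3 \<le> m"
  shows "(q - 1) * (q ^ (m - 1) - q ^ (m - 2) + q ^ ((m - 3) div 2))
    < q * (q ^ (m - 1) - q ^ (m - 2) - q ^ ((m - 3) div 2))"
proof -
  define A B where "A = q ^ (m - 2)" and "B = q ^ ((m - 3) div 2)"
  define X where "X = (q - 1) * A"
  \<comment> \<open>The claim amounts to \<open>(2q - 1) B < X\<close>, and \<open>X \<ge> (q - 1) q B \<ge> 2 q B\<close>.\<close>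
  have "m - 1 = Suc (m - 2)"
    using assms(2) by simp
  then have X: "q ^ (m - 1) - q ^ (m - 2) = X"
    by (simp add: A_def X_def diff_mult_distrib)
  have B: "1 \<le> B" "B \<le> q * B"
    using assms(1) by (simp_all add: B_def)
  have "2 * (q * B) \<le> (q - 1) * (q * B)"
    using assms(1) by (intro mult_le_mono1) simp
  also have "\<dots> \<le> X"
    unfolding X_def A_def B_def using assms by (simp flip: power_Suc add: power_increasing)
  finally have "2 * (q * B) \<le> X" .
  then have key: "2 * (int q * int B) \<le> int X"
    by (simp flip: of_nat_mult)
  have "B \<le> X"
    using B \<open>2 * (q * B) \<le> X\<close> by linarith
  have "int ((q - 1) * (X + B)) = (int q - 1) * (int X + int B)"
    using assms(1) by (simp add: of_nat_diff)
  also have "\<dots> = int q * int X + int q * int B - int X - int B"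
    by (simp add: algebra_simps)
  moreover have "int (q * (X - B)) = int q * int X - int q * int B"
    using \<open>B \<le> X\<close> by (simp add: of_nat_diff right_diff_distrib)
  ultimately have "int ((q - 1) * (X + B)) < int (q * (X - B))"
    using key B by linarith
  then show ?thesis
    unfolding X B_def[symmetric] by (simp only: of_nat_less_iff)
qed

theorem proposition4p9:
  fixes C :: "(nat \<Rightarrow> 'a::{field,finite}) set"
    and m q N n' w1 w2 w3 :: nat
    and rs :: "(nat \<Rightarrow> 'a) list"
    and a :: "nat \<Rightarrow> 'a"
  assumes q_def: "q = card (UNIV :: 'a set)"
    and q_prime: "prime q" and q_odd: "odd q"
    and m_ge: "m \<ge> 3" and m_odd: "odd m"
    and N_def: "N = q ^ (m - 1)"
    and w1_def: "w1 = q ^ (m - 1) - q ^ (m - 2) - q ^ ((m - 3) div 2)"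
    and w2_def: "w2 = q ^ (m - 1) - q ^ (m - 2)"
    and w3_def: "w3 = q ^ (m - 1) - q ^ (m - 2) + q ^ ((m - 3) div 2)"
    and n'_def: "n' = nat (\<lceil>real q / (real q - 1) * real w1\<rceil> - int w3)"
    and C_code: "linear_code N m C"
    and C_weights: "nonzero_weights C = {w1, w2, w3}"
    and rs_len: "length rs = m"
    and rs_distinct: "distinct rs"
    and rs_indep: "\<not> module.dependent sc (set rs)"
    and rs_span: "module.span sc (set rs) = C"
    and rs_1: "wt (rs ! 0) = max_weight C"
    and rs_2: "wt (rs ! 1) = min_weight C"
    and a_nz: "\<forall>i<n'. a i \<noteq> 0"
  shows "linear_code (N + n') m (extension_code n' a rs)
      \<and> min_weight (extension_code n' a rs) = w1
      \<and> max_weight (extension_code n' a rs) = w3 + n'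
      \<and> minimal_code (extension_code n' a rs)
      \<and> \<not> ashikhmin_barg q (extension_code n' a rs)"
proof -
  have "3 \<le> q"
    using prime_ge_2_nat[OF q_prime] q_odd by (cases "q = 2") auto
  then have ratio: "(q - 1) * w3 < q * w1"
    using three_weights_ratio m_ge by (simp add: w1_def w3_def)
  have "w1 \<le> w2" "w2 \<le> w3"
    by (simp_all add: w1_def w2_def w3_def)
  then have weights: "min_weight C = w1" "max_weight C = w3"
    using C_weights by (simp_all add: min_weight_def max_weight_def)
  have C: "V.subspace C" "C \<subseteq> words N"
    using C_code by (auto simp: linear_code_def)
  have "0 < q ^ ((m - 3) div 2)"
    using \<open>3 \<le> q\<close> by simp
  then have "0 < w3"
    unfolding w3_def by linarith
  then have "minimal_code C"
    using minimal_code_if_ashikhmin_barg[OF C] ratio weights q_def \<open>3 \<le> q\<close>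
    by (simp add: ashikhmin_barg_iff)
  interpret code_extension C N n' a rs
    using C rs_span rs_indep rs_distinct rs_len m_ge a_nz by unfold_locales auto
  show ?thesis
    using linear_code_C'[OF C_code] min_weight_C'[OF rs_2] max_weight_C'[OF rs_1]
      minimal_code_C'[OF \<open>minimal_code C\<close>] not_ashikhmin_barg_C'[OF _ rs_1 rs_2] \<open>3 \<le> q\<close>
    by (simp add: weights n'_def)
qed

end
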